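(* Let $z\in\mathbb{N}$, $z\ge1$, and let $w\in\{0,1\}^*$ be the standard binary representation of $z$ (no leading zeros). Let $(o_k)_{k\ge0}$ be the sequence of odd terms of the Collatz sequence $z,T(z),T^2(z),\dots$, listed in order of occurrence (so $o_0$ is the first odd term). Then for every $y_0\le0$, in the limit configuration $c_\infty[w]$ the cells of row $y_0$ whose sum bit is defined (i.e. not $\bot$) are exactly the cells $(x,y_0)$ with $x\le x_1$ for some integer $x_1$, only finitely many of these sum bits equal $1$, and, writing $b_x$ for the sum bit of $(x,y_0)$, one has $\sum_{x\le x_1} b_x\,2^{x_1-x}=2^{m}\,o_{|y_0|}$ for some integer $m\ge0$. (That is, row $y_0$ reads, west to east, $0^\infty u\,0^m$ where $u$ is the binary representation of $o_{|y_0|}$.)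
   Context: The Collatz map $T:\mathbb{N}\to\mathbb{N}$ is $T(x)=x/2$ for even $x$ and $T(x)=(3x+1)/2$ for odd $x$. Notation: $E=(1,0)$, $W=(-1,0)$, $N=(0,1)$, $S=(0,-1)$ in $\mathbb{Z}^2$; $[P]\in\{0,1\}$ equals $1$ iff $P$ holds. Strings are indexed from the right: $w=w_{k-1}\cdots w_0$. The CQCA. State set $\Sigma=\{0,1,\bot\}^2\setminus\{(\bot,0),(\bot,1)\}$; a state $(s,c)$ has sum bit $s$ and carry bit $c$. A state is undefined if it is $(\bot,\bot)$, half-defined if $s\in\{0,1\}$ and $c=\bot$, and defined if $s,c\in\{0,1\}$. A configuration is a map $C:\mathbb{Z}^2\to\Sigma$. One step $F(C)$: first the non-local rule produces $C'$: for each $u$, $C'(u)=(0,1)$ if $C(u+W)=(1,\bot)$, $C(u)\in\{(0,\bot),(\bot,\bot)\}$, and $C(u+iE)\in\{(0,\bot),(\bot,\bot)\}$ for all integers $i\ge1$; otherwise $C'(u)=C(u)$. Then the local rule is applied to $C'$ at every cell simultaneously: (i) if $C'(u)=(s,\bot)$ with $s\in\{0,1\}$ and $C'(u+E)=(s',c')$ is defined, then $F(C)(u)=(s,[s+s'+c'\ge2])$; (ii) if $C'(u)=(\bot,\bot)$, $C'(u+N)=(s,\bot)$ is half-defined and $C'(u+N+E)=(s',c')$ is defined, then $F(C)(u)=((s+s'+c')\bmod 2,\bot)$; (iii) otherwise $F(C)(u)=C'(u)$. For $w\in\{0,1\}^*$ the initial configuration $c_0[w]$ is: $c_0[w](-i,0)=(w_{i-1},\bot)$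 for $1\le i\le|w|$, $c_0[w](-i,0)=(0,\bot)$ for $i>|w|$, and $(\bot,\bot)$ elsewhere. Every cell's state in $F^i(c_0[w])$ is eventually constant in $i$; $c_\infty[w]$ denotes the pointwise limit. *)

theory Defs
  imports Main "HOL-Library.Infinite_Set"
begin

definition T :: "nat \<Rightarrow> nat" where
  "T x = (if even x then x div 2 else (3 * x + 1) div 2)"

definition odd_term :: "nat \<Rightarrow> nat \<Rightarrow> nat" where
  "odd_term z k = (T ^^ enumerate {n. odd ((T ^^ n) z)} k) z"

text \<open>Standard binary representation, most significant bit first (head of list),
  no leading zeros (bin_rep 0 = []). True = 1, False = 0.\<close>
fun bin_rep :: "nat \<Rightarrow> bool list" where
  "bin_rep n = (if n = 0 then [] else bin_rep (n div 2) @ [odd n])"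

text \<open>A state (s,c): sum bit and carry bit; None = \<bottom>, Some True = 1, Some False = 0.\<close>
type_synonym state = "bool option \<times> bool option"
type_synonym config = "int \<times> int \<Rightarrow> state"

definition undef_or_zero :: "state \<Rightarrow> bool" where
  "undef_or_zero st \<longleftrightarrow> st = (Some False, None) \<or> st = (None, None)"

definition nonlocal_step :: "config \<Rightarrow> config" where
  "nonlocal_step C = (\<lambda>(x, y).
     if C (x - 1, y) = (Some True, None) \<and> undef_or_zero (C (x, y))
        \<and> (\<forall>i::int. i \<ge> 1 \<longrightarrow> undef_or_zero (C (x + i, y)))
     then (Some False, Some True) else C (x, y))"

definition local_step :: "config \<Rightarrow> config" where
  "local_step C = (\<lambda>(x, y).
     case C (x, y) of
       (Some s, None) \<Rightarrow>
         (case C (x + 1, y) of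
            (Some s', Some c') \<Rightarrow>
              (Some s, Some (of_bool s + of_bool s' + of_bool c' \<ge> (2::nat)))
          | _ \<Rightarrow> C (x, y))
     | (None, None) \<Rightarrow>
         (case C (x, y + 1) of
            (Some s, None) \<Rightarrow>
              (case C (x + 1, y + 1) of
                 (Some s', Some c') \<Rightarrow>
                   (Some (odd (of_bool s + of_bool s' + of_bool c' :: nat)), None)
               | _ \<Rightarrow> C (x, y))
          | _ \<Rightarrow> C (x, y))
     | _ \<Rightarrow> C (x, y))"

definition F :: "config \<Rightarrow> config" where
  "F C = local_step (nonlocal_step C)"

text \<open>Initial configuration; w is written w_{k-1} ... w_0 with w_0 the last list element.\<close>
definition c0 :: "bool list \<Rightarrow> config" where
  "c0 w = (\<lambda>(x, y).
     if y = 0 \<and> x \<le> -1 then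
       (if nat (-x) \<le> length w then (Some (rev w ! (nat (-x) - 1)), None)
        else (Some False, None))
     else (None, None))"

definition c_inf :: "bool list \<Rightarrow> config" where
  "c_inf w = (\<lambda>u. THE v. \<exists>n. \<forall>i\<ge>n. (F ^^ i) (c0 w) u = v)"

end

theory Submission
  imports Defs
begin

(* Row k of the automaton performs one accelerated Collatz step on the odd number o_k written in
   it: 3 o_k + 1 = o_k + 2 o_k + 1 is computed by a ripple-carry adder, each cell adding its own
   digit (a bit of o_k), the digit of its eastern neighbour (a bit of 2 o_k) and that neighbour's
   carry, while the non-local rule supplies the carry-in 1 just east of the lowest one of the row.
   The sum bits of 3 o_k + 1 fill row k + 1 down to the column of the lowest one of row k, so the
   trailing zeros of 3 o_k + 1 are simply never computed and row k + 1 reads o_(k+1) followed by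
   zeros.  Sums and carries appear along a diagonal wave front, so the configuration at every time
   has a closed form, and its limit can be read off row by row. *)

fun trailing_zeros :: "nat \<Rightarrow> nat" where
  "trailing_zeros n = (if n = 0 \<or> odd n then 0 else Suc (trailing_zeros (n div 2)))"

declare trailing_zeros.simps [simp del]

definition odd_part :: "nat \<Rightarrow> nat" where
  "odd_part n = n div 2 ^ trailing_zeros n"

lemma trailing_zeros_eq_0: "n = 0 \<or> odd n \<Longrightarrow> trailing_zeros n = 0"
  by (subst trailing_zeros.simps) simp

lemma trailing_zeros_even: "n \<noteq> 0 \<Longrightarrow> even n \<Longrightarrow> trailing_zeros n = Suc (trailing_zeros (n div 2))"
  by (subst trailing_zeros.simps) simp

lemma odd_part_decomp: "n = 2 ^ trailing_zeros n * odd_part n \<and> (n \<noteq> 0 \<longrightarrow> odd (odd_part n))"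
proof (induction n rule: trailing_zeros.induct)
  case (1 n)
  show ?case
  proof (cases "n = 0 \<or> odd n")
    case True
    then show ?thesis by (auto simp: odd_part_def trailing_zeros_eq_0)
  next
    case False
    then have tz: "trailing_zeros n = Suc (trailing_zeros (n div 2))"
      by (simp add: trailing_zeros_even)
    then have odd_part_eq: "odd_part n = odd_part (n div 2)"
      by (simp add: odd_part_def div_mult2_eq)
    have "n div 2 \<noteq> 0" using False by auto
    with "1" False have IH: "n div 2 = 2 ^ trailing_zeros (n div 2) * odd_part (n div 2)"
      and odd: "odd (odd_part (n div 2))"
      by simp_all
    from False have "n = 2 * (n div 2)" by simp
    also have "\<dots> = 2 ^ trailing_zeros n * odd_part n"
      by (subst IH) (simp only: tz odd_part_eq power_Suc mult.assoc)
    finally show ?thesis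
      using odd by (simp add: odd_part_eq)
  qed
qed

lemma pow2_trailing_zeros_mult_odd_part: "2 ^ trailing_zeros n * odd_part n = n"
  using odd_part_decomp by simp

lemma odd_odd_part: "n \<noteq> 0 \<Longrightarrow> odd (odd_part n)"
  using odd_part_decomp by simp

lemma trailing_zeros_pos: "n \<noteq> 0 \<Longrightarrow> even n \<Longrightarrow> 0 < trailing_zeros n"
  by (simp add: trailing_zeros_even)

lemma bit_mult_pow2_iff: "bit (2 ^ a * m :: nat) j \<longleftrightarrow> a \<le> j \<and> bit m (j - a)"
proof -
  have "2 ^ a * m = push_bit a m" by (simp add: push_bit_eq_mult)
  then show ?thesis by (simp only: bit_push_bit_iff_nat)
qed

lemma sum_pow2_bits: "(\<Sum>i\<in>{i. bit n i}. 2 ^ i) = (n :: nat)"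
proof -
  have bits: "{i. bit n i} = {i \<in> {0..<n}. bit n i}"
    using bit_take_bit_iff[of n n] by (auto simp: take_bit_nat_eq_self)
  have "n = take_bit n n" by (simp add: take_bit_nat_eq_self)
  also have "\<dots> = (\<Sum>i = 0..<n. of_bool (bit n i) * 2 ^ i)"
    by (simp add: take_bit_sum push_bit_eq_mult)
  also have "\<dots> = (\<Sum>i = 0..<n. if bit n i then 2 ^ i else 0)"
    by (rule sum.cong) auto
  also have "\<dots> = (\<Sum>i\<in>{i. bit n i}. 2 ^ i)"
    unfolding bits by (rule sum.inter_filter[symmetric]) simp
  finally show ?thesis ..
qed

lemma finite_bits: "finite {i. bit (n :: nat) i}"
  using bit_take_bit_iff[of n n] by (auto simp: take_bit_nat_eq_self intro: finite_subset[of _ "{..<n}"])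

definition add_carry :: "nat \<Rightarrow> nat \<Rightarrow> bool \<Rightarrow> nat \<Rightarrow> bool" where
  "add_carry a b c i \<longleftrightarrow> 2 ^ i \<le> take_bit i a + take_bit i b + of_bool c"

lemma add_carry_0 [simp]: "add_carry a b c 0 = c"
  by (simp add: add_carry_def)

lemma take_bits_add_less: "take_bit i a + take_bit i b + of_bool c < 2 * 2 ^ i" for a b :: nat
proof -
  have "take_bit i a < 2 ^ i" "take_bit i b < 2 ^ i" "of_bool c \<le> (1::nat)"
    by simp_all
  then show ?thesis by linarith
qed

lemma add_carry_Suc:
  "add_carry a b c (Suc i) \<longleftrightarrow>
     2 \<le> of_bool (bit a i) + of_bool (bit b i) + (of_bool (add_carry a b c i) :: nat)"
  using take_bits_add_less[of i a b c]
  by (cases "bit a i"; cases "bit b i") (auto simp: add_carry_def take_bit_Suc_from_most)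

lemma bit_add_carry:
  "bit (a + b + of_bool c) i \<longleftrightarrow>
     odd (of_bool (bit a i) + of_bool (bit b i) + (of_bool (add_carry a b c i) :: nat))"
proof -
  let ?S = "take_bit i a + take_bit i b + of_bool c"
  have split: "a + b + of_bool c = ?S + (drop_bit i a + drop_bit i b) * 2 ^ i"
    using bits_ident[of i a] bits_ident[of i b] by (simp add: push_bit_eq_mult algebra_simps)
  have "(a + b + of_bool c) div 2 ^ i = ?S div 2 ^ i + drop_bit i a + drop_bit i b"
    unfolding split by simp
  moreover have "?S div 2 ^ i = of_bool (add_carry a b c i)"
    using take_bits_add_less[of i a b c] by (auto simp: add_carry_def div_eq_0_iff intro: div_nat_eqI)
  ultimately show ?thesis
    by (simp add: bit_iff_odd drop_bit_eq_div)
qed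

lemma sum_pow2_shifted_bits:
  fixes n :: nat and c d :: int
  assumes "c \<le> d"
  shows "(\<Sum>x\<in>(\<lambda>i. c - int i) ` {i. bit n i}. (2::nat) ^ nat (d - x)) = 2 ^ nat (d - c) * n"
proof -
  have "inj (\<lambda>i. c - int i)" by (rule injI) simp
  then have "(\<Sum>x\<in>(\<lambda>i. c - int i) ` {i. bit n i}. (2::nat) ^ nat (d - x))
      = (\<Sum>i\<in>{i. bit n i}. 2 ^ nat (d - (c - int i)))"
    by (simp add: sum.reindex inj_on_def)
  also have "\<dots> = (\<Sum>i\<in>{i. bit n i}. 2 ^ nat (d - c) * 2 ^ i)"
  proof (rule sum.cong)
    fix i
    have "nat (d - (c - int i)) = nat (d - c) + i" using assms by simp
    then show "(2::nat) ^ nat (d - (c - int i)) = 2 ^ nat (d - c) * 2 ^ i"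
      by (simp add: power_add)
  qed simp
  also have "\<dots> = 2 ^ nat (d - c) * n"
    by (simp add: sum_distrib_left[symmetric] sum_pow2_bits)
  finally show ?thesis .
qed

declare bin_rep.simps [simp del]

lemma bin_rep_0: "bin_rep 0 = []"
  by (subst bin_rep.simps) simp

lemma bin_rep_nonzero: "n \<noteq> 0 \<Longrightarrow> bin_rep n = bin_rep (n div 2) @ [odd n]"
  by (subst bin_rep.simps) simp

lemma nth_rev_bin_rep: "i < length (bin_rep n) \<Longrightarrow> rev (bin_rep n) ! i = bit n i"
proof (induction n arbitrary: i rule: bin_rep.induct)
  case (1 n)
  have "n \<noteq> 0" using "1.prems" by (cases "n = 0") (simp_all add: bin_rep_0)
  then have rev_eq: "rev (bin_rep n) = odd n # rev (bin_rep (n div 2))"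
    by (simp add: bin_rep_nonzero)
  show ?case
  proof (cases i)
    case 0
    then show ?thesis by (simp add: rev_eq bit_0)
  next
    case (Suc j)
    with "1.prems" rev_eq have "j < length (bin_rep (n div 2))" by simp
    with "1.IH" \<open>n \<noteq> 0\<close> Suc rev_eq show ?thesis by (simp add: bit_Suc)
  qed
qed

lemma less_pow2_length_bin_rep: "n < 2 ^ length (bin_rep n)"
proof (induction n rule: bin_rep.induct)
  case (1 n)
  show ?case
  proof (cases "n = 0")
    case False
    with 1 show ?thesis by (simp add: bin_rep_nonzero)
  qed simp
qed

lemma not_bit_beyond_bin_rep:
  assumes "length (bin_rep n) \<le> i"
  shows "\<not> bit n i"
proof -
  have "take_bit (length (bin_rep n)) n = n"
    using less_pow2_length_bin_rep by (simp add: take_bit_nat_eq_self_iff)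
  with assms show ?thesis
    by (metis bit_take_bit_iff not_le)
qed

lemma funpow_T_pow2_mult: "(T ^^ j) (2 ^ j * q) = q"
proof (induction j arbitrary: q)
  case (Suc j)
  have "T (2 ^ Suc j * q) = 2 ^ j * q" by (simp add: T_def)
  with Suc show ?case by (simp add: funpow_Suc_right del: funpow.simps)
qed simp

lemma even_funpow_T_pow2_mult:
  assumes "j < a"
  shows "even ((T ^^ j) (2 ^ a * q))"
proof -
  have "(2::nat) ^ a * q = 2 ^ j * (2 ^ (a - j) * q)"
    using assms by (simp add: power_add[symmetric])
  then have "(T ^^ j) (2 ^ a * q) = 2 ^ (a - j) * q"
    by (simp only: funpow_T_pow2_mult)
  with assms show ?thesis by simp
qed

lemma enumerate_eqI:
  fixes f :: "nat \<Rightarrow> nat"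
  assumes mono: "strict_mono f" and in_S: "\<And>k. f k \<in> S"
    and before_first: "\<And>n. n < f 0 \<Longrightarrow> n \<notin> S"
    and between: "\<And>k n. f k < n \<Longrightarrow> n < f (Suc k) \<Longrightarrow> n \<notin> S"
  shows "enumerate S k = f k"
proof -
  have "infinite S"
    using in_S strict_mono_imp_inj_on[OF mono] range_inj_infinite infinite_super
    by (metis image_subsetI)
  show ?thesis
  proof (induction k)
    case 0
    show ?case
      unfolding enumerate_0 using in_S before_first by (intro Least_equality) (auto simp: not_less[symmetric])
  next
    case (Suc k)
    show ?case
      unfolding enumerate_Suc''[OF \<open>infinite S\<close>] Suc
      using in_S between strict_monoD[OF mono, of k "Suc k"]
      by (intro Least_equality) (auto simp: not_less[symmetric])
  qed
qed

lemma local_step_defined: "C (x, y) = (Some s, Some c) \<Longrightarrow> local_step C (x, y) = C (x, y)"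
  by (simp add: local_step_def)

lemma local_step_carry:
  "C (x, y) = (Some s, None) \<Longrightarrow> C (x + 1, y) = (Some s', Some c') \<Longrightarrow>
   local_step C (x, y) = (Some s, Some (2 \<le> of_bool s + of_bool s' + (of_bool c' :: nat)))"
  by (simp add: local_step_def)

lemma local_step_no_carry:
  "C (x, y) = (Some s, None) \<Longrightarrow> (\<And>s' c'. C (x + 1, y) \<noteq> (Some s', Some c')) \<Longrightarrow>
   local_step C (x, y) = C (x, y)"
  by (auto simp: local_step_def split: option.splits prod.splits)

lemma local_step_sum:
  "C (x, y) = (None, None) \<Longrightarrow> C (x, y + 1) = (Some s, None) \<Longrightarrow>
   C (x + 1, y + 1) = (Some s', Some c') \<Longrightarrow>
   local_step C (x, y) = (Some (odd (of_bool s + of_bool s' + of_bool c' :: nat)), None)"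
  by (simp add: local_step_def)

lemma local_step_no_sum:
  "C (x, y) = (None, None) \<Longrightarrow> (\<And>s' c'. C (x + 1, y + 1) \<noteq> (Some s', Some c')) \<Longrightarrow>
   local_step C (x, y) = C (x, y)"
  by (auto simp: local_step_def split: option.splits prod.splits)

lemma c0_bin_rep:
  "c0 (bin_rep n) (x, y) = (if y = 0 \<and> x \<le> -1 then (Some (bit n (nat (- 1 - x))), None) else (None, None))"
proof -
  have "nat (- x) - 1 = nat (- 1 - x)" by simp
  then show ?thesis
    by (auto simp: c0_def nth_rev_bin_rep not_bit_beyond_bin_rep)
qed

lemma c_inf_eqI: "(\<And>i. N \<le> i \<Longrightarrow> (F ^^ i) (c0 w) u = v) \<Longrightarrow> c_inf w u = v"
  unfolding c_inf_def by (rule the_equality) (blast, metis le_cases)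

section \<open>The Collatz orbit through odd parts\<close>

locale collatz_cqca =
  fixes z :: nat
  assumes z_pos: "0 < z"
begin

fun row_value :: "nat \<Rightarrow> nat" where
  "row_value 0 = z"
| "row_value (Suc k) = 3 * odd_part (row_value k) + 1"

definition row_odd :: "nat \<Rightarrow> nat" where
  "row_odd k = odd_part (row_value k)"

lemma row_value_pos: "0 < row_value k"
  using z_pos by (cases k) auto

lemma odd_row_odd: "odd (row_odd k)"
  using odd_odd_part row_value_pos by (simp add: row_odd_def)

lemma row_value_eq: "row_value k = 2 ^ trailing_zeros (row_value k) * row_odd k"
  by (simp add: row_odd_def pow2_trailing_zeros_mult_odd_part)

lemma row_value_Suc: "row_value (Suc k) = 3 * row_odd k + 1"
  by (simp add: row_odd_def)

declare row_value.simps(2) [simp del]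

lemma trailing_zeros_row_value_Suc_pos: "0 < trailing_zeros (row_value (Suc k))"
  using odd_row_odd[of k] by (intro trailing_zeros_pos) (simp_all add: row_value_Suc)

fun odd_index :: "nat \<Rightarrow> nat" where
  "odd_index 0 = trailing_zeros z"
| "odd_index (Suc k) = odd_index k + trailing_zeros (row_value (Suc k))"

lemma T_row_odd: "T (row_odd k) = 2 ^ (trailing_zeros (row_value (Suc k)) - 1) * row_odd (Suc k)"
proof -
  have "2 * T (row_odd k) = row_value (Suc k)"
    using odd_row_odd[of k] by (simp add: T_def row_value_Suc)
  also have "\<dots> = 2 * (2 ^ (trailing_zeros (row_value (Suc k)) - 1) * row_odd (Suc k))"
    using trailing_zeros_row_value_Suc_pos[of k]
    by (subst row_value_eq) (simp add: power_eq_if)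
  finally show ?thesis by simp
qed

lemma funpow_T_after_odd_index:
  "(T ^^ (j + Suc (odd_index k))) z = (T ^^ j) (T ((T ^^ odd_index k) z))"
  by (simp only: funpow_add funpow.simps(2) comp_apply)

lemma funpow_T_odd_index: "(T ^^ odd_index k) z = row_odd k"
proof (induction k)
  case 0
  show ?case
    using funpow_T_pow2_mult row_value_eq[of 0] by (metis odd_index.simps(1) row_value.simps(1))
next
  case (Suc k)
  let ?a = "trailing_zeros (row_value (Suc k))"
  have "odd_index (Suc k) = (?a - 1) + Suc (odd_index k)"
    using trailing_zeros_row_value_Suc_pos[of k] by simp
  then show ?case
    by (simp only: funpow_T_after_odd_index Suc T_row_odd funpow_T_pow2_mult)
qed

lemma even_funpow_T_between_odd_indices:
  assumes "odd_index k < n" "n < odd_index (Suc k)"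
  shows "even ((T ^^ n) z)"
proof -
  let ?a = "trailing_zeros (row_value (Suc k))"
  have "n = (n - Suc (odd_index k)) + Suc (odd_index k)" "n - Suc (odd_index k) < ?a - 1"
    using assms by auto
  then show ?thesis
    by (metis funpow_T_after_odd_index funpow_T_odd_index T_row_odd even_funpow_T_pow2_mult)
qed

lemma even_funpow_T_before_first_odd_index: "n < odd_index 0 \<Longrightarrow> even ((T ^^ n) z)"
  using even_funpow_T_pow2_mult row_value_eq[of 0] by (metis odd_index.simps(1) row_value.simps(1))

lemma odd_term_eq_row_odd: "odd_term z k = row_odd k"
proof -
  have "strict_mono odd_index"
    unfolding strict_mono_Suc_iff by (simp add: trailing_zeros_row_value_Suc_pos)
  then have "enumerate {n. odd ((T ^^ n) z)} k = odd_index k"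
    using funpow_T_odd_index odd_row_odd even_funpow_T_between_odd_indices
      even_funpow_T_before_first_odd_index
    by (intro enumerate_eqI) auto
  then show ?thesis by (simp add: odd_term_def funpow_T_odd_index)
qed

(* Row k holds row_value k with its units bit in column row_end k.  The trailing zeros of a row
   are never consumed, so row k + 1 ends below the lowest one of row k. *)
fun row_end :: "nat \<Rightarrow> int" where
  "row_end 0 = -1"
| "row_end (Suc k) = row_end k - int (trailing_zeros (row_value k))"

definition lowest_one :: "nat \<Rightarrow> int" where
  "lowest_one k = row_end k - int (trailing_zeros (row_value k))"

lemma row_end_Suc: "row_end (Suc k) = lowest_one k"
  by (simp add: lowest_one_def)

declare row_end.simps(2) [simp del]

lemma lowest_one_le_row_end: "lowest_one k \<le> row_end k"
  by (simp add: lowest_one_def)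

lemma lowest_one_Suc_less: "lowest_one (Suc k) < lowest_one k"
  using trailing_zeros_row_value_Suc_pos[of k] by (simp add: lowest_one_def row_end_Suc)

lemma lowest_one_le_lowest_one_0: "lowest_one k \<le> lowest_one 0"
  by (induction k) (auto intro: order.trans less_imp_le lowest_one_Suc_less)

lemma row_end_le_lowest_one_0: "0 < k \<Longrightarrow> row_end k \<le> lowest_one 0"
  by (cases k) (simp_all add: row_end_Suc lowest_one_le_lowest_one_0)

(* Column lowest_one k + 1 - i of row k holds bit i of 2 o_k and, once it is computed, the carry
   into bit i of o_k + 2 o_k + 1; for i = 0 this is the cell the non-local rule sets to (0, 1). *)
definition row_digit :: "nat \<Rightarrow> int \<Rightarrow> bool" where
  "row_digit k x \<longleftrightarrow> x \<le> lowest_one k \<and> bit (row_odd k) (nat (lowest_one k - x))"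

definition row_carry :: "nat \<Rightarrow> int \<Rightarrow> bool" where
  "row_carry k x \<longleftrightarrow> add_carry (row_odd k) (2 * row_odd k) True (nat (lowest_one k + 1 - x))"

lemma row_digit_lowest_one: "row_digit k (lowest_one k)"
  using odd_row_odd by (simp add: row_digit_def bit_0)

lemma row_digit_eq_bit_row_value:
  assumes "x \<le> row_end k"
  shows "row_digit k x = bit (row_value k) (nat (row_end k - x))"
proof -
  have "bit (row_value k) (nat (row_end k - x))
      \<longleftrightarrow> trailing_zeros (row_value k) \<le> nat (row_end k - x)
          \<and> bit (row_odd k) (nat (row_end k - x) - trailing_zeros (row_value k))"
    by (subst row_value_eq) (rule bit_mult_pow2_iff)
  moreover have "x \<le> lowest_one k \<longleftrightarrow> trailing_zeros (row_value k) \<le> nat (row_end k - x)"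
    and "nat (lowest_one k - x) = nat (row_end k - x) - trailing_zeros (row_value k)"
    using assms by (auto simp: lowest_one_def)
  ultimately show ?thesis
    by (simp add: row_digit_def)
qed

lemma row_digit_as_addends:
  assumes "x \<le> lowest_one k"
  defines "i \<equiv> nat (lowest_one k - x)"
  shows "row_digit k x = bit (row_odd k) i"
    and "row_digit k (x + 1) = bit (2 * row_odd k) i"
    and "row_carry k (x + 1) = add_carry (row_odd k) (2 * row_odd k) True i"
    and "row_carry k x = add_carry (row_odd k) (2 * row_odd k) True (Suc i)"
proof -
  have "nat (lowest_one k + 1 - x) = Suc i" "nat (lowest_one k + 1 - (x + 1)) = i"
    and "x + 1 \<le> lowest_one k \<longleftrightarrow> i \<noteq> 0" "nat (lowest_one k - (x + 1)) = i - 1"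
    using assms by (auto simp: i_def)
  with assms show "row_digit k x = bit (row_odd k) i"
    and "row_digit k (x + 1) = bit (2 * row_odd k) i"
    and "row_carry k (x + 1) = add_carry (row_odd k) (2 * row_odd k) True i"
    and "row_carry k x = add_carry (row_odd k) (2 * row_odd k) True (Suc i)"
    by (simp_all add: row_digit_def row_carry_def bit_double_iff i_def)
qed

lemma row_carry_eq_east:
  "x \<le> lowest_one k \<Longrightarrow>
   row_carry k x \<longleftrightarrow>
     2 \<le> of_bool (row_digit k x) + of_bool (row_digit k (x + 1)) + (of_bool (row_carry k (x + 1)) :: nat)"
  by (simp add: row_digit_as_addends add_carry_Suc)

lemma row_digit_Suc_eq_east:
  assumes "x \<le> lowest_one k"
  shows "row_digit (Suc k) x \<longleftrightarrow>
     odd (of_bool (row_digit k x) + of_bool (row_digit k (x + 1)) + (of_bool (row_carry k (x + 1)) :: nat))"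
proof -
  have "row_digit (Suc k) x = bit (row_odd k + 2 * row_odd k + of_bool True) (nat (lowest_one k - x))"
    using assms by (simp add: row_digit_eq_bit_row_value row_end_Suc row_value_Suc)
  then show ?thesis
    using assms by (simp only: row_digit_as_addends bit_add_carry)
qed

section \<open>Configurations along the wave front\<close>

(* The sum bit of column x in row k > 0 appears at time front k x and its carry one step later. *)
definition front :: "nat \<Rightarrow> int \<Rightarrow> int" where
  "front k x = int k + lowest_one 0 - x"

definition carry_shown :: "nat \<Rightarrow> nat \<Rightarrow> nat \<Rightarrow> int \<Rightarrow> bool" where
  "carry_shown t t' k x \<longleftrightarrow>
     x \<le> lowest_one k \<and> front k x < int t \<or> x = lowest_one k + 1 \<and> front k x + 1 < int t'"

definition sum_shown :: "nat \<Rightarrow> nat \<Rightarrow> int \<Rightarrow> bool" where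
  "sum_shown t k x \<longleftrightarrow> x \<le> row_end k \<and> (k = 0 \<or> front k x \<le> int t)"

definition cell :: "nat \<Rightarrow> nat \<Rightarrow> nat \<Rightarrow> int \<Rightarrow> state" where
  "cell t t' k x =
     (if carry_shown t t' k x then (Some (row_digit k x), Some (row_carry k x))
      else if sum_shown t k x then (Some (row_digit k x), None)
      else (None, None))"

(* snapshot t t' is the configuration after t local and t' non-local steps, so that
   (F ^^ t) (c0 (bin_rep z)) = snapshot t t; only the carry-in planted by the non-local rule
   depends on t'. *)
definition snapshot :: "nat \<Rightarrow> nat \<Rightarrow> config" where
  "snapshot t t' = (\<lambda>(x, y). if 0 < y then (None, None) else cell t t' (nat (- y)) x)"

lemma snapshot_row: "snapshot t t' (x, - int k) = cell t t' k x"
  by (simp add: snapshot_def)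

lemma snapshot_above: "0 < y \<Longrightarrow> snapshot t t' (x, y) = (None, None)"
  by (simp add: snapshot_def)

lemma cell_not_defined: "\<not> carry_shown t t' k x \<Longrightarrow> cell t t' k x \<noteq> (Some s, Some c)"
  by (simp add: cell_def)

lemma undef_or_zero_cell:
  "lowest_one k < x \<Longrightarrow> \<not> carry_shown t t' k x \<Longrightarrow> undef_or_zero (cell t t' k x)"
  by (simp add: cell_def undef_or_zero_def row_digit_def)

lemma nonlocal_rule_fires_iff:
  "cell t t k (x - 1) = (Some True, None) \<and> undef_or_zero (cell t t k x)
     \<and> (\<forall>i::int. i \<ge> 1 \<longrightarrow> undef_or_zero (cell t t k (x + i)))
   \<longleftrightarrow> x = lowest_one k + 1 \<and> front k x + 1 = int t"
proof
  assume fires: "cell t t k (x - 1) = (Some True, None) \<and> undef_or_zero (cell t t k x)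
     \<and> (\<forall>i::int. i \<ge> 1 \<longrightarrow> undef_or_zero (cell t t k (x + i)))"
  then have east_zero: "undef_or_zero (cell t t k (x + i))" if "0 \<le> i" for i
    using that by (cases "i = 0") auto
  from fires have shown: "\<not> carry_shown t t k (x - 1)" "sum_shown t k (x - 1)" "row_digit k (x - 1)"
    by (auto simp: cell_def split: if_splits)
  have "x - 1 = lowest_one k"
  proof (rule ccontr)
    assume "x - 1 \<noteq> lowest_one k"
    with shown have "x \<le> lowest_one k" by (simp add: row_digit_def)
    with shown have "fst (cell t t k (x + (lowest_one k - x))) = Some True"
      using lowest_one_le_row_end[of k] row_digit_lowest_one[of k]
      by (auto simp: cell_def sum_shown_def front_def)
    with east_zero[of "lowest_one k - x"] \<open>x \<le> lowest_one k\<close> show False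
      by (auto simp: undef_or_zero_def)
  qed
  with shown show "x = lowest_one k + 1 \<and> front k x + 1 = int t"
    by (auto simp: carry_shown_def sum_shown_def front_def)
next
  assume at_front: "x = lowest_one k + 1 \<and> front k x + 1 = int t"
  then have "cell t t k (x - 1) = (Some True, None)"
    using lowest_one_le_row_end[of k] row_digit_lowest_one[of k]
    by (auto simp: cell_def carry_shown_def sum_shown_def front_def)
  moreover have "undef_or_zero (cell t t k (x + i))" if "0 \<le> i" for i
    using at_front that by (intro undef_or_zero_cell) (auto simp: carry_shown_def front_def)
  ultimately show "cell t t k (x - 1) = (Some True, None) \<and> undef_or_zero (cell t t k x)
     \<and> (\<forall>i::int. i \<ge> 1 \<longrightarrow> undef_or_zero (cell t t k (x + i)))"
    by (metis add.right_neutral order.refl zero_le_one order.trans)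
qed

lemma cell_after_nonlocal:
  "cell t (Suc t) k x =
     (if x = lowest_one k + 1 \<and> front k x + 1 = int t then (Some False, Some True) else cell t t k x)"
  by (auto simp: cell_def carry_shown_def row_digit_def row_carry_def)

lemma nonlocal_step_snapshot: "nonlocal_step (snapshot t t) = snapshot t (Suc t)"
proof (rule ext, clarify)
  fix x y :: int
  show "nonlocal_step (snapshot t t) (x, y) = snapshot t (Suc t) (x, y)"
  proof (cases "0 < y")
    case True
    then show ?thesis by (simp add: nonlocal_step_def snapshot_above)
  next
    case False
    then obtain k where y: "y = - int k"
      by (metis neg_0_le_iff_le nonneg_int_cases not_less minus_minus)
    have "nonlocal_step (snapshot t t) (x, - int k) =
      (if cell t t k (x - 1) = (Some True, None) \<and> undef_or_zero (cell t t k x)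
          \<and> (\<forall>i::int. i \<ge> 1 \<longrightarrow> undef_or_zero (cell t t k (x + i)))
       then (Some False, Some True) else cell t t k x)"
      by (simp only: nonlocal_step_def prod.case snapshot_row)
    then show ?thesis
      by (simp only: y nonlocal_rule_fires_iff snapshot_row cell_after_nonlocal)
  qed
qed

lemma carry_shown_after_nonlocal:
  "carry_shown t (Suc t) k x \<longleftrightarrow> x \<le> lowest_one k + 1 \<and> front k x < int t"
  by (auto simp: carry_shown_def)

lemma carry_shown_Suc: "carry_shown t (Suc t) k x \<Longrightarrow> carry_shown (Suc t) (Suc t) k x"
  by (auto simp: carry_shown_def)

lemma sum_shown_Suc: "sum_shown t k x \<Longrightarrow> sum_shown (Suc t) k x"
  by (auto simp: sum_shown_def)

lemma local_step_snapshot_carry_wave: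
  assumes "\<not> carry_shown t (Suc t) k x" "carry_shown (Suc t) (Suc t) k x"
  shows "local_step (snapshot t (Suc t)) (x, - int k) = cell (Suc t) (Suc t) k x"
proof -
  from assms have "x \<le> lowest_one k" "front k x = int t"
    by (auto simp: carry_shown_def)
  then have "snapshot t (Suc t) (x, - int k) = (Some (row_digit k x), None)"
    and "snapshot t (Suc t) (x + 1, - int k) = (Some (row_digit k (x + 1)), Some (row_carry k (x + 1)))"
    using assms lowest_one_le_row_end[of k]
    by (auto simp: snapshot_row cell_def carry_shown_after_nonlocal sum_shown_def front_def)
  with assms \<open>x \<le> lowest_one k\<close> show ?thesis
    by (simp add: local_step_carry row_carry_eq_east cell_def)
qed

lemma local_step_snapshot_sum_wave:
  assumes "\<not> carry_shown (Suc t) (Suc t) k x" "\<not> sum_shown t k x" "sum_shown (Suc t) k x"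
  shows "local_step (snapshot t (Suc t)) (x, - int k) = cell (Suc t) (Suc t) k x"
proof -
  let ?C = "snapshot t (Suc t)"
  have "?C (x, - int k) = (None, None)"
    using assms carry_shown_Suc by (auto simp: snapshot_row cell_def)
  obtain j where k: "k = Suc j" and "x \<le> lowest_one j" "front k x = int t + 1"
    using assms by (cases k) (auto simp: sum_shown_def row_end_Suc)
  moreover have "- int k + 1 = - int j" using k by simp
  ultimately have "?C (x, - int k + 1) = (Some (row_digit j x), None)"
    and "?C (x + 1, - int k + 1) = (Some (row_digit j (x + 1)), Some (row_carry j (x + 1)))"
    using lowest_one_le_row_end[of j]
    by (auto simp: snapshot_row cell_def carry_shown_def sum_shown_def front_def)
  with \<open>?C (x, - int k) = (None, None)\<close> assms k \<open>x \<le> lowest_one j\<close> show ?thesis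
    by (simp add: local_step_sum row_digit_Suc_eq_east cell_def)
qed

lemma local_step_snapshot_row:
  "local_step (snapshot t (Suc t)) (x, - int k) = cell (Suc t) (Suc t) k x"
proof -
  let ?C = "snapshot t (Suc t)"
  consider (old_carry) "carry_shown t (Suc t) k x"
    | (new_carry) "\<not> carry_shown t (Suc t) k x" "carry_shown (Suc t) (Suc t) k x"
    | (old_sum) "\<not> carry_shown (Suc t) (Suc t) k x" "sum_shown t k x"
    | (new_sum) "\<not> carry_shown (Suc t) (Suc t) k x" "\<not> sum_shown t k x" "sum_shown (Suc t) k x"
    | (hidden) "\<not> carry_shown (Suc t) (Suc t) k x" "\<not> sum_shown (Suc t) k x"
    by blast
  then show ?thesis
  proof cases
    case old_carry
    then show ?thesis
      using carry_shown_Suc by (subst local_step_defined) (auto simp: snapshot_row cell_def)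
  next
    case old_sum
    then have "?C (x, - int k) = (Some (row_digit k x), None)"
      using carry_shown_Suc by (auto simp: snapshot_row cell_def)
    moreover have "\<not> carry_shown t (Suc t) k (x + 1)"
      using old_sum(1) by (auto simp: carry_shown_def front_def)
    ultimately show ?thesis
      using old_sum sum_shown_Suc
      by (subst local_step_no_carry) (auto simp: snapshot_row cell_def cell_not_defined)
  next
    case hidden
    have "\<not> carry_shown t (Suc t) j (x + 1)" if "k = Suc j" for j
      using hidden that by (auto simp: carry_shown_def sum_shown_def front_def row_end_Suc)
    then have "?C (x + 1, - int k + 1) \<noteq> (Some s', Some c')" for s' c'
      by (cases k) (auto simp: snapshot_above snapshot_row cell_not_defined)
    then show ?thesis
      using hidden carry_shown_Suc sum_shown_Suc
      by (subst local_step_no_sum) (auto simp: snapshot_row cell_def)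
  qed (simp_all add: local_step_snapshot_carry_wave local_step_snapshot_sum_wave)
qed

lemma local_step_snapshot: "local_step (snapshot t (Suc t)) = snapshot (Suc t) (Suc t)"
proof (rule ext, clarify)
  fix x y :: int
  show "local_step (snapshot t (Suc t)) (x, y) = snapshot (Suc t) (Suc t) (x, y)"
  proof (cases "0 < y")
    case True
    then show ?thesis by (subst local_step_no_sum) (simp_all add: snapshot_above)
  next
    case False
    then obtain k where "y = - int k"
      by (metis neg_0_le_iff_le nonneg_int_cases not_less minus_minus)
    then show ?thesis by (simp only: local_step_snapshot_row snapshot_row)
  qed
qed

lemma snapshot_0: "snapshot 0 0 = c0 (bin_rep z)"
proof (rule ext, clarify)
  fix x y :: int
  show "snapshot 0 0 (x, y) = c0 (bin_rep z) (x, y)"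
  proof (cases "0 < y")
    case True
    then show ?thesis by (simp add: snapshot_above c0_bin_rep)
  next
    case False
    then obtain k where y: "y = - int k"
      by (metis neg_0_le_iff_le nonneg_int_cases not_less minus_minus)
    have "\<not> carry_shown 0 0 k x"
      using lowest_one_le_lowest_one_0[of k] by (auto simp: carry_shown_def front_def)
    moreover have "sum_shown 0 k x \<longleftrightarrow> k = 0 \<and> x \<le> -1"
      using row_end_le_lowest_one_0[of k] by (cases "k = 0") (auto simp: sum_shown_def front_def)
    ultimately show ?thesis
      by (auto simp: y snapshot_row cell_def c0_bin_rep row_digit_eq_bit_row_value)
  qed
qed

lemma funpow_F_c0: "(F ^^ t) (c0 (bin_rep z)) = snapshot t t"
  by (induction t) (simp_all add: snapshot_0 F_def nonlocal_step_snapshot local_step_snapshot)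

section \<open>The limit configuration\<close>

definition limit_cell :: "nat \<Rightarrow> int \<Rightarrow> state" where
  "limit_cell k x =
     (if x \<le> lowest_one k + 1 then (Some (row_digit k x), Some (row_carry k x))
      else if x \<le> row_end k then (Some (row_digit k x), None)
      else (None, None))"

lemma c_inf_row: "c_inf (bin_rep z) (x, - int k) = limit_cell k x"
proof (rule c_inf_eqI)
  fix t
  assume "nat (front k x + 2) \<le> t"
  then show "(F ^^ t) (c0 (bin_rep z)) (x, - int k) = limit_cell k x"
    by (auto simp: funpow_F_c0 snapshot_row cell_def limit_cell_def carry_shown_def sum_shown_def
        front_def)
qed

lemma limit_cell_sum_defined_iff:
  "fst (limit_cell k x) \<noteq> None \<longleftrightarrow> x \<le> max (row_end k) (lowest_one k + 1)"
  by (simp add: limit_cell_def le_max_iff_disj)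

lemma ones_of_limit_row:
  "{x. fst (limit_cell k x) = Some True} = (\<lambda>i. lowest_one k - int i) ` {i. bit (row_odd k) i}"
  using lowest_one_le_row_end[of k]
  by (auto simp: limit_cell_def row_digit_def image_iff intro!: exI[of _ "nat (lowest_one k - _)"])

lemma limit_row_value:
  assumes "lowest_one k \<le> x1"
  shows "(\<Sum>x\<in>{x. x \<le> x1 \<and> fst (limit_cell k x) = Some True}. (2::nat) ^ nat (x1 - x))
    = 2 ^ nat (x1 - lowest_one k) * odd_term z k"
proof -
  have "x \<le> lowest_one k" if "fst (limit_cell k x) = Some True" for x
    using that by (auto simp: limit_cell_def row_digit_def split: if_splits)
  with assms have "{x. x \<le> x1 \<and> fst (limit_cell k x) = Some True} = {x. fst (limit_cell k x) = Some True}"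
    by fastforce
  then show ?thesis
    using assms by (simp add: ones_of_limit_row sum_pow2_shifted_bits odd_term_eq_row_odd)
qed

lemma limit_row:
  assumes "y0 \<le> 0"
  shows "\<exists>x1::int.
       (\<forall>x. fst (c_inf (bin_rep z) (x, y0)) \<noteq> None \<longleftrightarrow> x \<le> x1)
     \<and> finite {x. fst (c_inf (bin_rep z) (x, y0)) = Some True}
     \<and> (\<exists>m::nat.
          (\<Sum>x\<in>{x. x \<le> x1 \<and> fst (c_inf (bin_rep z) (x, y0)) = Some True}.
              (2::nat) ^ nat (x1 - x))
          = 2 ^ m * odd_term z (nat (- y0)))"
proof -
  define k where "k = nat (- y0)"
  define x1 where "x1 = max (row_end k) (lowest_one k + 1)"
  have row: "c_inf (bin_rep z) (x, y0) = limit_cell k x" for x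
    using assms c_inf_row[of x k] by (simp add: k_def)
  show ?thesis
    unfolding row
  proof (intro exI[of _ x1] conjI)
    show "\<forall>x. fst (limit_cell k x) \<noteq> None \<longleftrightarrow> x \<le> x1"
      unfolding x1_def using limit_cell_sum_defined_iff by blast
    show "finite {x. fst (limit_cell k x) = Some True}"
      by (simp add: ones_of_limit_row finite_bits)
    show "\<exists>m. (\<Sum>x\<in>{x. x \<le> x1 \<and> fst (limit_cell k x) = Some True}. (2::nat) ^ nat (x1 - x))
        = 2 ^ m * odd_term z (nat (- y0))"
      using limit_row_value[of k x1] by (auto simp: x1_def k_def)
  qed
qed

end

theorem mainTheorem2:
  fixes z :: nat
  assumes "z \<ge> 1"
  shows "\<forall>y0::int. y0 \<le> 0 \<longrightarrow>
    (\<exists>x1::int.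
       (\<forall>x. fst (c_inf (bin_rep z) (x, y0)) \<noteq> None \<longleftrightarrow> x \<le> x1)
     \<and> finite {x. fst (c_inf (bin_rep z) (x, y0)) = Some True}
     \<and> (\<exists>m::nat.
          (\<Sum>x\<in>{x. x \<le> x1 \<and> fst (c_inf (bin_rep z) (x, y0)) = Some True}.
              (2::nat) ^ nat (x1 - x))
          = 2 ^ m * odd_term z (nat (- y0))))"
proof -
  interpret collatz_cqca z
    using assms by unfold_locales simp
  show ?thesis
    using limit_row by blast
qed

end
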